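(* Let $(\mathbb E;B,Q;M)$ be a metric double vector bundle with core $Q^*$, and let $D\subseteq\mathbb E$ be a double vector subbundle with sides $B'\subseteq B$, $U\subseteq Q$ and core $K\subseteq Q^*$. Let $\Sigma\colon B\times_MQ\to\mathbb E$ be a linear splitting adapted to $D$ ($\Sigma(B'\times_MU)\subseteq D$) with associated symmetric form $\Lambda$. Then $D$ is maximal isotropic (i.e. $D_b$ is maximal isotropic in the fibre $\mathbb E_b$ of $\mathbb E\to B$ for all $b\in B'$) if and only if $U=K^\circ$ and $\Lambda(u_1,u_2)\in(B')^\circ$ for all $m\in M$ and $u_1,u_2\in U_m$.
   Context: A double vector bundle $(\mathbb E;B,Q;M)$ with core $Q^*$: $\mathbb E$ carries commuting vector bundle structures over $B$ and over $Q$; the core is the intersection of the kernels of the two projections. A linear splitting $\Sigma\colon B\times_MQ\to\mathbb E$ is a double vector bundle embedding inducing the identity on $B$ and $Q$; it yields $\mathbb E\cong B\times_MQ\times_MQ^*$ (additions $(b,q,\tau)+_B(b,q',\tau')=(b,q+q',\tau+\tau')$, $(b,q,\tau)+_Q(b',q,\tau')=(b+b',q,\tau+\tau')$), horizontal lifts $\sigma_Q(q)(b_m)=\Sigma(b_m,q(m))$ and core sections $\tau^\dagger(b_m)=(b_m,0,\tau(m))$. The double vector bundle is metric if $\mathbb E\to B$ has a symmetric fibrewise nondegenerate pairing with $\langle\tau_1^\dagger,\tau_2^\dagger\rangle=0$, $\langle\chi,\tau^\dagger\rangle=q_B^*\langle q,\tau\rangle$ for linear sections $\chi$ over $q$, and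 $\langle\chi_1,\chi_2\rangle$ fibrewise linear on $B$ for linear sections. $\Lambda\colon Q\times_MQ\to B^*$ (symmetric bilinear) is defined by $\langle\sigma_Q(q_1),\sigma_Q(q_2)\rangle=\ell_{\Lambda(q_1,q_2)}$, $\ell_\beta$ the linear function on $B$ of $\beta\in\Gamma(B^* )$; thus $\langle(b,q_1,\tau_1),(b,q_2,\tau_2)\rangle=\langle\Lambda(q_1,q_2),b\rangle+\langle q_1,\tau_2\rangle+\langle q_2,\tau_1\rangle$. An adapted double subbundle with sides $B',U$, core $K$ corresponds to $B'\times_MU\times_MK$. $K^\circ\subseteq Q$, $(B')^\circ\subseteq B^*$ are annihilators. *)

theory Defs
  imports "HOL-Analysis.Analysis"
begin

text \<open>Everything is modelled fibrewise over points m of the base M, in the decomposition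
  E = B \<times>_M Q \<times>_M Q^* induced by the linear splitting Sigma.  The fibres of B and Q
  are the finite-dimensional real spaces 'b and 'q; the fibre of the core Q^* is the space
  'c, identified with the dual of 'q through a perfect pairing qp.\<close>

definition perfect_pairing :: "('q::euclidean_space \<Rightarrow> 'c::euclidean_space \<Rightarrow> real) \<Rightarrow> bool" where
  "perfect_pairing qp \<longleftrightarrow> bilinear qp
     \<and> (\<forall>q. (\<forall>t. qp q t = 0) \<longrightarrow> q = 0)
     \<and> (\<forall>t. (\<forall>q. qp q t = 0) \<longrightarrow> t = 0)"

definition sym_bilinear_dual ::
    "('q::euclidean_space \<Rightarrow> 'q \<Rightarrow> 'b::euclidean_space \<Rightarrow> real) \<Rightarrow> bool" where
  "sym_bilinear_dual L \<longleftrightarrow>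
     (\<forall>q1 q2. linear (L q1 q2))
     \<and> (\<forall>b. bilinear (\<lambda>q1 q2. L q1 q2 b))
     \<and> (\<forall>q1 q2. L q1 q2 = L q2 q1)"

text \<open>The metric of E restricted to the fibre E_b = {b} \<times> Q_m \<times> Q^*_m, b \<in> B_m:
  <(b,q1,t1),(b,q2,t2)> = <Lambda(q1,q2),b> + <q1,t2> + <q2,t1>.\<close>
definition dvb_pairing ::
    "('q \<Rightarrow> 'c \<Rightarrow> real) \<Rightarrow> ('q \<Rightarrow> 'q \<Rightarrow> 'b \<Rightarrow> real) \<Rightarrow> 'b \<Rightarrow> ('q \<times> 'c) \<Rightarrow> ('q \<times> 'c) \<Rightarrow> real" where
  "dvb_pairing qp L b x y = L (fst x) (fst y) b + qp (fst x) (snd y) + qp (fst y) (snd x)"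

definition isotropic :: "('v \<Rightarrow> 'v \<Rightarrow> real) \<Rightarrow> 'v set \<Rightarrow> bool" where
  "isotropic g S \<longleftrightarrow> (\<forall>x\<in>S. \<forall>y\<in>S. g x y = 0)"

definition maximal_isotropic :: "('v::real_vector \<Rightarrow> 'v \<Rightarrow> real) \<Rightarrow> 'v set \<Rightarrow> bool" where
  "maximal_isotropic g S \<longleftrightarrow> subspace S \<and> isotropic g S
     \<and> (\<forall>T. subspace T \<and> isotropic g T \<and> S \<subseteq> T \<longrightarrow> T = S)"

definition core_annihilator :: "('q \<Rightarrow> 'c \<Rightarrow> real) \<Rightarrow> 'c set \<Rightarrow> 'q set" where
  "core_annihilator qp K = {q. \<forall>t\<in>K. qp q t = 0}"

definition dual_annihilator :: "'b::real_vector set \<Rightarrow> ('b \<Rightarrow> real) set" where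
  "dual_annihilator B' = {\<beta>. linear \<beta> \<and> (\<forall>b\<in>B'. \<beta> b = 0)}"

end

theory Submission
  imports Defs
begin

text \<open>On the fibre over b the metric is the split pairing of Q and Q^* plus the term
  \<open>\<Lambda>(q1,q2)(b)\<close>.  Hence \<open>U \<times> K\<close> is isotropic there iff \<open>U \<subseteq> K\<^sup>\<circ>\<close> and \<open>\<Lambda>\<close> vanishes on U at b,
  and an isotropic \<open>K\<^sup>\<circ> \<times> K\<close> is automatically maximal because \<open>K\<^sup>\<circ>\<^sup>\<circ> = K\<close> for a perfect
  pairing of finite-dimensional spaces.  Over \<open>b = 0\<close> the \<open>\<Lambda>\<close>-term disappears, \<open>K\<^sup>\<circ> \<times> K\<close> is
  isotropic, and maximality of \<open>U \<times> K \<subseteq> K\<^sup>\<circ> \<times> K\<close> forces \<open>U = K\<^sup>\<circ>\<close>.\<close>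

lemma perfect_pairing_surj:
  fixes qp :: "'q::euclidean_space \<Rightarrow> 'c::euclidean_space \<Rightarrow> real"
  assumes pp: "perfect_pairing qp" and f: "linear f"
  shows "\<exists>q. qp q = f"
proof -
  have bl: "bilinear qp"
    using pp by (simp add: perfect_pairing_def)
  define R where "R q = adjoint (qp q) 1" for q
  have qp_R: "qp q c = c \<bullet> R q" for q c
    using adjoint_works[of "qp q" c 1] bl by (simp add: R_def bilinear_def)
  have "linear R"
  proof (rule linearI)
    show "R (x + y) = R x + R y" for x y
      by (rule vector_eq_ldot[THEN iffD1])
        (simp add: inner_add_right bilinear_ladd[OF bl] flip: qp_R)
    show "R (r *\<^sub>R x) = r *\<^sub>R R x" for r x
      by (rule vector_eq_ldot[THEN iffD1]) (simp add: bilinear_lmul[OF bl] flip: qp_R)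
  qed
  moreover have "inj (adjoint R)"
    unfolding linear_injective_0[OF adjoint_linear[OF \<open>linear R\<close>]]
  proof (intro allI impI)
    fix w assume "adjoint R w = 0"
    then have "qp q w = 0" for q
      using adjoint_clauses(2)[OF \<open>linear R\<close>, of w q] by (simp add: qp_R)
    then show "w = 0"
      using pp by (simp add: perfect_pairing_def)
  qed
  ultimately obtain q where "R q = adjoint f 1"
    by (metis inj_adjoint_iff_surj surjD)
  then have "qp q c = f c" for c
    using adjoint_works[OF f, of c 1] by (simp add: qp_R)
  then show ?thesis
    by blast
qed

lemma subspace_core_annihilator:
  assumes "bilinear qp"
  shows "subspace (core_annihilator qp K)"
  unfolding subspace_def core_annihilator_def
  by (auto simp: bilinear_lzero[OF assms] bilinear_ladd[OF assms] bilinear_lmul[OF assms])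

lemma perfect_pairing_annihilator_annihilator:
  fixes qp :: "'q::euclidean_space \<Rightarrow> 'c::euclidean_space \<Rightarrow> real"
  assumes pp: "perfect_pairing qp" and K: "subspace K"
  shows "(\<forall>q\<in>core_annihilator qp K. qp q t = 0) \<longleftrightarrow> t \<in> K"
proof
  assume t: "\<forall>q\<in>core_annihilator qp K. qp q t = 0"
  have "orthogonal z t" if z: "z \<in> K\<^sup>\<bottom>" for z
  proof -
    obtain q where q: "qp q = (\<lambda>c. z \<bullet> c)"
      using perfect_pairing_surj[OF pp bounded_linear_inner_right[THEN bounded_linear.linear]] by blast
    have "q \<in> core_annihilator qp K"
      using z by (simp add: q core_annihilator_def orthogonal_comp_def orthogonal_def inner_commute)
    then have "qp q t = 0"
      using t by blast
    then show ?thesis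
      by (simp add: q orthogonal_def)
  qed
  then have "t \<in> K\<^sup>\<bottom>\<^sup>\<bottom>"
    by (simp add: orthogonal_comp_def)
  then show "t \<in> K"
    by (simp add: orthogonal_comp_self[OF K])
qed (simp add: core_annihilator_def)

lemma isotropic_dvb_pairing_Times_iff:
  assumes qp: "bilinear qp" and L: "bilinear (\<lambda>q1 q2. L q1 q2 b)"
    and U: "subspace U" and K: "subspace K"
  shows "isotropic (dvb_pairing qp L b) (U \<times> K)
    \<longleftrightarrow> U \<subseteq> core_annihilator qp K \<and> (\<forall>u1\<in>U. \<forall>u2\<in>U. L u1 u2 b = 0)"
proof
  assume iso: "isotropic (dvb_pairing qp L b) (U \<times> K)"
  note zero_simps = bilinear_lzero[OF qp] bilinear_rzero[OF qp] bilinear_rzero[OF L]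
  have "qp u k = 0" if "u \<in> U" "k \<in> K" for u k
  proof -
    have "dvb_pairing qp L b (u, 0) (0, k) = 0"
      using iso that U K by (simp add: isotropic_def subspace_0)
    then show ?thesis
      by (simp add: dvb_pairing_def zero_simps)
  qed
  moreover have "L u u' b = 0" if "u \<in> U" "u' \<in> U" for u u'
  proof -
    have "dvb_pairing qp L b (u, 0) (u', 0) = 0"
      using iso that K by (simp add: isotropic_def subspace_0)
    then show ?thesis
      by (simp add: dvb_pairing_def zero_simps)
  qed
  ultimately show "U \<subseteq> core_annihilator qp K \<and> (\<forall>u1\<in>U. \<forall>u2\<in>U. L u1 u2 b = 0)"
    by (auto simp: core_annihilator_def)
qed (auto simp: isotropic_def dvb_pairing_def core_annihilator_def subset_eq)

lemma maximal_isotropic_dvb_pairing_annihilator: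
  fixes qp :: "'q::euclidean_space \<Rightarrow> 'c::euclidean_space \<Rightarrow> real"
  assumes pp: "perfect_pairing qp" and L: "bilinear (\<lambda>q1 q2. L q1 q2 b)" and K: "subspace K"
    and iso: "isotropic (dvb_pairing qp L b) (core_annihilator qp K \<times> K)"
  shows "maximal_isotropic (dvb_pairing qp L b) (core_annihilator qp K \<times> K)"
proof -
  let ?g = "dvb_pairing qp L b" and ?A = "core_annihilator qp K"
  have qp: "bilinear qp"
    using pp by (simp add: perfect_pairing_def)
  have g_vertical: "?g (q, t) (0, k) = qp q k" "?g (0, t) (a, 0) = qp a t" for q t k a
    by (simp_all add: dvb_pairing_def bilinear_lzero[OF qp] bilinear_rzero[OF qp]
        bilinear_lzero[OF L] bilinear_rzero[OF L])
  have "T \<subseteq> ?A \<times> K"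
    if T: "subspace T" "isotropic ?g T" and AK_T: "?A \<times> K \<subseteq> T" for T
  proof (rule subrelI)
    fix q t assume qt: "(q, t) \<in> T"
    have "qp q k = 0" if "k \<in> K" for k
    proof -
      have "(0, k) \<in> T"
        using AK_T that subspace_0[OF subspace_core_annihilator[OF qp]] by blast
      then show ?thesis
        using T(2) qt g_vertical(1) unfolding isotropic_def by metis
    qed
    then have q: "q \<in> ?A"
      by (simp add: core_annihilator_def)
    have "(q, 0) \<in> T"
      using AK_T q subspace_0[OF K] by blast
    then have "(0, t) \<in> T"
      using subspace_diff[OF T(1) qt] by fastforce
    moreover have "(a, 0) \<in> T" if "a \<in> ?A" for a
      using AK_T that subspace_0[OF K] by blast
    ultimately have "\<forall>a\<in>?A. qp a t = 0"
      using T(2) g_vertical(2) unfolding isotropic_def by metis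
    then have "t \<in> K"
      using perfect_pairing_annihilator_annihilator[OF pp K] by blast
    with q show "(q, t) \<in> ?A \<times> K"
      by simp
  qed
  then show ?thesis
    using iso subspace_Times[OF subspace_core_annihilator[OF qp] K]
    by (auto simp: maximal_isotropic_def)
qed

lemma maximal_isotropic_over_side_iff:
  fixes qp :: "'q::euclidean_space \<Rightarrow> 'c::euclidean_space \<Rightarrow> real"
    and L :: "'q \<Rightarrow> 'q \<Rightarrow> 'b::euclidean_space \<Rightarrow> real"
  assumes pp: "perfect_pairing qp" and L: "sym_bilinear_dual L"
    and B': "subspace B'" and U: "subspace U" and K: "subspace K"
  shows "(\<forall>b\<in>B'. maximal_isotropic (dvb_pairing qp L b) (U \<times> K))
    \<longleftrightarrow> U = core_annihilator qp K \<and> (\<forall>u1\<in>U. \<forall>u2\<in>U. L u1 u2 \<in> dual_annihilator B')"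
    (is "?maxiso \<longleftrightarrow> ?U_eq \<and> ?\<Lambda>_ann")
proof -
  have qp: "bilinear qp"
    using pp by (simp add: perfect_pairing_def)
  have L_bilinear: "bilinear (\<lambda>q1 q2. L q1 q2 b)" for b
    using L by (simp add: sym_bilinear_dual_def)
  have L_linear: "linear (L q1 q2)" for q1 q2
    using L by (simp add: sym_bilinear_dual_def)
  have A: "subspace (core_annihilator qp K)"
    by (rule subspace_core_annihilator[OF qp])
  have iso_iff: "isotropic (dvb_pairing qp L b) (V \<times> K)
      \<longleftrightarrow> V \<subseteq> core_annihilator qp K \<and> (\<forall>u1\<in>V. \<forall>u2\<in>V. L u1 u2 b = 0)"
    if "subspace V" for V b
    by (rule isotropic_dvb_pairing_Times_iff[OF qp L_bilinear that K])
  show ?thesis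
  proof
    assume maxiso: ?maxiso
    have MI0: "maximal_isotropic (dvb_pairing qp L 0) (U \<times> K)"
      using maxiso subspace_0[OF B'] by blast
    then have "U \<subseteq> core_annihilator qp K"
      using iso_iff[OF U] by (simp add: maximal_isotropic_def)
    moreover have "isotropic (dvb_pairing qp L 0) (core_annihilator qp K \<times> K)"
      using iso_iff[OF A] linear_0[OF L_linear] by simp
    ultimately have "core_annihilator qp K \<times> K = U \<times> K"
      using MI0 subspace_Times[OF A K] unfolding maximal_isotropic_def by blast
    then have ?U_eq
      using subspace_0[OF K] by blast
    moreover have ?\<Lambda>_ann
    proof (intro ballI)
      fix u1 u2 assume "u1 \<in> U" "u2 \<in> U"
      then have "L u1 u2 b = 0" if "b \<in> B'" for b
        using maxiso that iso_iff[OF U, of b] unfolding maximal_isotropic_def by blast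
      then show "L u1 u2 \<in> dual_annihilator B'"
        using L_linear by (simp add: dual_annihilator_def)
    qed
    ultimately show "?U_eq \<and> ?\<Lambda>_ann" ..
  next
    assume "?U_eq \<and> ?\<Lambda>_ann"
    then have U_eq: ?U_eq and \<Lambda>_ann: ?\<Lambda>_ann
      by simp_all
    show ?maxiso
    proof
      fix b assume "b \<in> B'"
      then have "isotropic (dvb_pairing qp L b) (U \<times> K)"
        using iso_iff[OF U] U_eq \<Lambda>_ann by (simp add: dual_annihilator_def)
      then show "maximal_isotropic (dvb_pairing qp L b) (U \<times> K)"
        using maximal_isotropic_dvb_pairing_annihilator[where L = L and b = b, OF pp L_bilinear K] U_eq
        by simp
    qed
  qed
qed

theorem proposition5p2:
  fixes M :: "'m set"
    and qp :: "'q::euclidean_space \<Rightarrow> 'c::euclidean_space \<Rightarrow> real"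
    and \<Lambda> :: "'m \<Rightarrow> 'q \<Rightarrow> 'q \<Rightarrow> 'b::euclidean_space \<Rightarrow> real"
    and B' :: "'m \<Rightarrow> 'b set" and U :: "'m \<Rightarrow> 'q set" and K :: "'m \<Rightarrow> 'c set"
  assumes "perfect_pairing qp"
    and "\<forall>m\<in>M. sym_bilinear_dual (\<Lambda> m)"
    and "\<forall>m\<in>M. subspace (B' m) \<and> subspace (U m) \<and> subspace (K m)"
  shows "(\<forall>m\<in>M. \<forall>b\<in>B' m. maximal_isotropic (dvb_pairing qp (\<Lambda> m) b) (U m \<times> K m))
     \<longleftrightarrow> (\<forall>m\<in>M. U m = core_annihilator qp (K m)
            \<and> (\<forall>u1\<in>U m. \<forall>u2\<in>U m. \<Lambda> m u1 u2 \<in> dual_annihilator (B' m)))"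
proof -
  have "(\<forall>b\<in>B' m. maximal_isotropic (dvb_pairing qp (\<Lambda> m) b) (U m \<times> K m))
     \<longleftrightarrow> U m = core_annihilator qp (K m)
            \<and> (\<forall>u1\<in>U m. \<forall>u2\<in>U m. \<Lambda> m u1 u2 \<in> dual_annihilator (B' m))"
    if "m \<in> M" for m
    using maximal_isotropic_over_side_iff[OF assms(1)] assms(2,3) that by blast
  then show ?thesis
    by (simp cong: ball_cong)
qed

end
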